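(* Let $(V,\|\cdot\|)$ be a rectilinear normed plane, i.e. one whose unit circle is a parallelogram. Then $c_B(\|\cdot\|)=\frac12$.
   Context: A normed (Minkowski) plane $(V,\|\cdot\|)$ is a two-dimensional real vector space with a norm; $o$ is the origin, $B=\{v:\|v\|\le1\}$ the unit ball, $S=\{v:\|v\|=1\}$ the unit circle. For distinct $x,y$, $\mathrm{bis}(x,y)=\{z\in V:\|z-x\|=\|z-y\|\}$. For $x\in S$, the inner projection is $\mathrm{P_I}(x)=\{z/\|z\|: z\in(\mathrm{bis}(-x,x)\cap B)\setminus\{o\}\}$. The sine function is $s:S\times S\to\mathbb{R}$, $s(u,v)=\inf_{t\in\mathbb{R}}\|u+tv\|$. The constant $c_B$ is $c_B(\|\cdot\|)=\inf_{x\in S}\ \inf_{w\in\mathrm{P_I}(x)} s(w,x)$. *)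

theory Defs
  imports "HOL-Analysis.Analysis"
begin

definition is_norm :: "(real^2 \<Rightarrow> real) \<Rightarrow> bool" where
  "is_norm N \<longleftrightarrow>
     (\<forall>x. N x = 0 \<longleftrightarrow> x = 0) \<and>
     (\<forall>c x. N (c *\<^sub>R x) = \<bar>c\<bar> * N x) \<and>
     (\<forall>x y. N (x + y) \<le> N x + N y)"

definition unit_ball_N :: "(real^2 \<Rightarrow> real) \<Rightarrow> (real^2) set" where
  "unit_ball_N N = {v. N v \<le> 1}"

definition unit_circle_N :: "(real^2 \<Rightarrow> real) \<Rightarrow> (real^2) set" where
  "unit_circle_N N = {v. N v = 1}"

definition parallelogram :: "(real^2) set \<Rightarrow> bool" where
  "parallelogram P \<longleftrightarrow> (\<exists>p u v. independent {u, v} \<and> u \<noteq> v \<and>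
      P = convex hull {p, p + u, p + v, p + u + v})"

definition rectilinear :: "(real^2 \<Rightarrow> real) \<Rightarrow> bool" where
  "rectilinear N \<longleftrightarrow> (\<exists>P. parallelogram P \<and> unit_circle_N N = frontier P)"

definition bis :: "(real^2 \<Rightarrow> real) \<Rightarrow> real^2 \<Rightarrow> real^2 \<Rightarrow> (real^2) set" where
  "bis N x y = {z. N (z - x) = N (z - y)}"

definition inner_proj :: "(real^2 \<Rightarrow> real) \<Rightarrow> real^2 \<Rightarrow> (real^2) set" where
  "inner_proj N x = (\<lambda>z. (1 / N z) *\<^sub>R z) ` ((bis N (- x) x \<inter> unit_ball_N N) - {0})"

definition sine_N :: "(real^2 \<Rightarrow> real) \<Rightarrow> real^2 \<Rightarrow> real^2 \<Rightarrow> real" where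
  "sine_N N u v = (INF t\<in>(UNIV::real set). N (u + t *\<^sub>R v))"

definition c_B :: "(real^2 \<Rightarrow> real) \<Rightarrow> real" where
  "c_B N = (INF x\<in>unit_circle_N N. (INF w\<in>inner_proj N x. sine_N N w x))"

end

theory Submission
  imports Defs
begin

text \<open>The unit circle of a rectilinear norm is the image of the boundary of the square
  [-1,1]^2 under an affine bijection q \<mapsto> c + K q. Being symmetric about 0 as well as about c,
  the unit circle is invariant under translation by 2c, so c = 0 and N \<circ> K is the maximum norm.
  Since c_B is invariant under linear isomorphisms, it remains to compute it for the maximum norm.
  For a unit vector x = (1, a), every point z of the bisector of -x and x in the unit ball
  satisfies |z1| \<le> |z2| and z1 z2 a \<le> 0, which forces \<parallel>z + t x\<parallel> \<ge> |z2|/2 for every t;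
  hence c_B \<ge> 1/2. Conversely, for 0 \<le> a < 1 the vector (0, 1) is an inner
  projection of (1, a) with sine at most 1/(1 + a), which tends to 1/2 as a \<rightarrow> 1.\<close>

lemma is_norm_eq_0:
  assumes "is_norm N" shows "N x = 0 \<longleftrightarrow> x = 0"
  using assms unfolding is_norm_def by blast

lemma is_norm_scaleR:
  assumes "is_norm N" shows "N (c *\<^sub>R x) = \<bar>c\<bar> * N x"
  using assms unfolding is_norm_def by blast

lemma is_norm_triangle:
  assumes "is_norm N" shows "N (x + y) \<le> N x + N y"
  using assms unfolding is_norm_def by blast

lemma is_norm_zero:
  assumes "is_norm N" shows "N 0 = 0"
  using is_norm_eq_0[OF assms] by simp

lemma is_norm_minus:
  assumes "is_norm N" shows "N (- x) = N x"
  using is_norm_scaleR[OF assms, of "-1" x] by simp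

lemma is_norm_nonneg:
  assumes "is_norm N" shows "0 \<le> N x"
  using is_norm_triangle[OF assms, of x "- x"] is_norm_minus[OF assms, of x] is_norm_zero[OF assms]
  by simp

lemma is_norm_normalize:
  assumes "is_norm N" "z \<noteq> 0" shows "N ((1 / N z) *\<^sub>R z) = 1"
  using assms is_norm_scaleR[OF assms(1)] is_norm_eq_0[OF assms(1)] is_norm_nonneg[OF assms(1), of z]
  by simp

lemma is_norm_comp_linear:
  assumes "is_norm N" "linear K" "inj K"
  shows "is_norm (\<lambda>z. N (K z))"
proof -
  have "K z = 0 \<longleftrightarrow> z = 0" for z
    using inj_eq[OF assms(3), of z 0] linear_0[OF assms(2)] by simp
  then show ?thesis using assms(1) unfolding is_norm_def by (simp add: linear_add[OF assms(2)] linear_scale[OF assms(2)])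
qed

lemma is_norm_eq_if_unit_circle_eq:
  assumes N: "is_norm N" and M: "is_norm M" and S: "unit_circle_N N = unit_circle_N M"
  shows "N = M"
proof
  fix v
  show "N v = M v"
  proof (cases "v = 0")
    case True
    then show ?thesis using is_norm_zero[OF N] is_norm_zero[OF M] by simp
  next
    case False
    then have "(1 / N v) *\<^sub>R v \<in> unit_circle_N M"
      using is_norm_normalize[OF N] S unfolding unit_circle_N_def by blast
    then have "M v / N v = 1"
      using is_norm_scaleR[OF M] is_norm_nonneg[OF N, of v] by (simp add: unit_circle_N_def)
    then show ?thesis using False is_norm_eq_0[OF N] by simp
  qed
qed

lemma unit_circle_translation_eq_0:
  assumes N: "is_norm N" and s0: "s0 \<in> unit_circle_N N"
    and translate: "\<And>s. s \<in> unit_circle_N N \<Longrightarrow> s + d \<in> unit_circle_N N"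
  shows "d = 0"
proof -
  have orbit: "s0 + real n *\<^sub>R d \<in> unit_circle_N N" for n
  proof (induction n)
    case (Suc n)
    from translate[OF Suc] show ?case by (simp add: algebra_simps)
  qed (use s0 in simp)
  have bounded: "real n * N d \<le> 2" for n
  proof -
    have "N (real n *\<^sub>R d) \<le> N (s0 + real n *\<^sub>R d) + N (- s0)"
      using is_norm_triangle[OF N, of "s0 + real n *\<^sub>R d" "- s0"] by simp
    then show ?thesis
      using orbit[of n] s0 is_norm_minus[OF N] is_norm_scaleR[OF N] by (simp add: unit_circle_N_def)
  qed
  have "N d = 0"
  proof (rule ccontr)
    assume "N d \<noteq> 0"
    then have "0 < N d" using is_norm_nonneg[OF N, of d] by simp
    then obtain n where "2 < real n * N d" using reals_Archimedean3 by blast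
    with bounded[of n] show False by simp
  qed
  then show ?thesis using is_norm_eq_0[OF N] by simp
qed

lemma mem_inner_proj_iff:
  "w \<in> inner_proj N x \<longleftrightarrow> (\<exists>z. N (z + x) = N (z - x) \<and> N z \<le> 1 \<and> z \<noteq> 0 \<and> w = (1 / N z) *\<^sub>R z)"
  unfolding inner_proj_def bis_def unit_ball_N_def by auto

lemma sine_N_normalize_ge:
  assumes N: "is_norm N" and z: "z \<noteq> 0" and bound: "\<And>t. b * N z \<le> N (z + t *\<^sub>R x)"
  shows "b \<le> sine_N N ((1 / N z) *\<^sub>R z) x"
  unfolding sine_N_def
proof (rule cINF_greatest)
  fix t
  have pos: "0 < N z" using z is_norm_nonneg[OF N, of z] is_norm_eq_0[OF N, of z] by simp
  have "z + (t * N z) *\<^sub>R x = N z *\<^sub>R ((1 / N z) *\<^sub>R z + t *\<^sub>R x)"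
    using pos by (simp add: algebra_simps)
  then have "N (z + (t * N z) *\<^sub>R x) = N z * N ((1 / N z) *\<^sub>R z + t *\<^sub>R x)"
    using pos is_norm_scaleR[OF N] by simp
  then show "b \<le> N ((1 / N z) *\<^sub>R z + t *\<^sub>R x)"
    using bound[of "t * N z"] pos by (simp add: mult.commute mult_le_cancel_left_pos)
qed simp

definition max_norm :: "real^2 \<Rightarrow> real" where
  "max_norm q = max \<bar>q$1\<bar> \<bar>q$2\<bar>"

lemma is_norm_max_norm: "is_norm max_norm"
  unfolding is_norm_def max_norm_def
proof (intro conjI allI)
  fix c :: real and x y :: "real^2"
  show "max \<bar>x$1\<bar> \<bar>x$2\<bar> = 0 \<longleftrightarrow> x = 0"
    by (auto simp: vec_eq_iff forall_2 max_def)
  show "max \<bar>(c *\<^sub>R x)$1\<bar> \<bar>(c *\<^sub>R x)$2\<bar> = \<bar>c\<bar> * max \<bar>x$1\<bar> \<bar>x$2\<bar>"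
    by (simp add: abs_mult max_mult_distrib_left)
  show "max \<bar>(x + y)$1\<bar> \<bar>(x + y)$2\<bar> \<le> max \<bar>x$1\<bar> \<bar>x$2\<bar> + max \<bar>y$1\<bar> \<bar>y$2\<bar>"
    by (simp add: max_def abs_triangle_ineq[THEN order_trans])
qed

lemma max_bisector_pos_coord:
  fixes a z1 z2 :: real
  assumes a: "\<bar>a\<bar> \<le> 1" and z2: "\<bar>z2\<bar> \<le> 1" and z1: "0 < z1"
    and bis: "max (\<bar>z1 + 1\<bar>) (\<bar>z2 + a\<bar>) = max (\<bar>z1 - 1\<bar>) (\<bar>z2 - a\<bar>)"
  shows "z1 \<le> \<bar>z2\<bar> \<and> z2 * a < 0"
proof -
  have "\<bar>z1 - 1\<bar> < \<bar>z1 + 1\<bar>" using z1 by simp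
  then have far: "z1 + 1 \<le> \<bar>z2 - a\<bar>" using z1 bis by (simp add: max_def split: if_splits)
  then have "z2 * a < 0" using a z2 z1 by (cases "0 \<le> z2"; cases "0 \<le> a") (auto simp: mult_less_0_iff)
  then have "\<bar>z2 - a\<bar> = \<bar>z2\<bar> + \<bar>a\<bar>" by (smt (verit) mult_less_0_iff)
  with far a \<open>z2 * a < 0\<close> show ?thesis by linarith
qed

lemma max_bisector_coords:
  fixes a z1 z2 :: real
  assumes a: "\<bar>a\<bar> \<le> 1" and z2: "\<bar>z2\<bar> \<le> 1"
    and bis: "max (\<bar>z1 + 1\<bar>) (\<bar>z2 + a\<bar>) = max (\<bar>z1 - 1\<bar>) (\<bar>z2 - a\<bar>)"
  shows "\<bar>z1\<bar> \<le> \<bar>z2\<bar> \<and> z1 * (z2 * a) \<le> 0"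
proof -
  consider "z1 = 0" | "0 < z1" | "0 < - z1" by linarith
  then show ?thesis
  proof cases
    case 2
    with max_bisector_pos_coord[OF a z2 2 bis] show ?thesis by (auto intro: mult_pos_neg less_imp_le)
  next
    case 3
    have "max (\<bar>- z1 + 1\<bar>) (\<bar>- z2 + a\<bar>) = max (\<bar>- z1 - 1\<bar>) (\<bar>- z2 - a\<bar>)"
      using bis by (simp add: abs_minus_commute add.commute)
    from max_bisector_pos_coord[OF a _ 3 this] z2 have "- z1 \<le> \<bar>z2\<bar>" "z2 * a > 0" by auto
    with 3 show ?thesis by (auto intro: mult_neg_pos less_imp_le)
  qed simp
qed

lemma max_bisector_bound_coords:
  fixes a z1 z2 t :: real
  assumes a: "\<bar>a\<bar> \<le> 1" and z: "\<bar>z1\<bar> \<le> \<bar>z2\<bar>" "z1 * (z2 * a) \<le> 0"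
  shows "\<bar>z2\<bar> \<le> 2 * max (\<bar>z1 + t\<bar>) (\<bar>z2 + t * a\<bar>)"
proof (cases "\<bar>z2\<bar> \<le> 2 * \<bar>z2 + t * a\<bar>")
  case False
  then have opp: "z2 * a * t < 0" and big: "\<bar>z2\<bar> < 2 * \<bar>t * a\<bar>"
    by (smt (verit) mult.commute mult_less_0_iff mult.assoc)+
  have "0 \<le> z1 * t"
  proof -
    have "0 \<le> (z1 * (z2 * a)) * (z2 * a * t)" using z(2) opp by (simp add: mult_nonpos_nonpos)
    then have "0 \<le> (z1 * t) * (z2 * a)\<^sup>2" by (simp add: power2_eq_square algebra_simps)
    moreover have "0 < (z2 * a)\<^sup>2" using opp by auto
    ultimately show ?thesis by (simp add: zero_le_mult_iff)
  qed
  then have "\<bar>t\<bar> \<le> \<bar>z1 + t\<bar>" by (smt (verit) zero_le_mult_iff)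
  moreover have "\<bar>t * a\<bar> \<le> \<bar>t\<bar>" using a by (simp add: abs_mult mult_left_le)
  ultimately show ?thesis using big by (simp add: max_def)
qed (simp add: max_def)

lemma max_bisector_bound:
  fixes x1 x2 z1 z2 t :: real
  assumes x1: "\<bar>x1\<bar> = 1" and x2: "\<bar>x2\<bar> \<le> 1" and z2: "\<bar>z2\<bar> \<le> 1"
    and bis: "max (\<bar>z1 + x1\<bar>) (\<bar>z2 + x2\<bar>) = max (\<bar>z1 - x1\<bar>) (\<bar>z2 - x2\<bar>)"
  shows "max (\<bar>z1\<bar>) (\<bar>z2\<bar>) \<le> 2 * max (\<bar>z1 + t * x1\<bar>) (\<bar>z2 + t * x2\<bar>)"
proof (cases "x1 = 1")
  case True
  then have "\<bar>z1\<bar> \<le> \<bar>z2\<bar> \<and> z1 * (z2 * x2) \<le> 0"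
    using max_bisector_coords[OF x2 z2] bis by simp
  with max_bisector_bound_coords[OF x2, of z1 z2 t] True show ?thesis
    by (simp add: max_absorb2)
next
  case False
  then have x1': "x1 = -1" using x1 by linarith
  have x2': "\<bar>- x2\<bar> \<le> 1" using x2 by simp
  have "max (\<bar>z1 + 1\<bar>) (\<bar>z2 + - x2\<bar>) = max (\<bar>z1 - 1\<bar>) (\<bar>z2 - - x2\<bar>)"
    using bis x1' by (simp add: max.commute)
  then have "\<bar>z1\<bar> \<le> \<bar>z2\<bar> \<and> z1 * (z2 * - x2) \<le> 0"
    by (rule max_bisector_coords[OF x2' z2])
  with max_bisector_bound_coords[OF x2', of z1 z2 "- t"] x1' show ?thesis
    by (simp add: max_absorb2)
qed

lemma max_norm_bisector_bound:
  assumes x: "max_norm x = 1" and z: "max_norm z \<le> 1"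
    and bis: "max_norm (z + x) = max_norm (z - x)"
  shows "max_norm z \<le> 2 * max_norm (z + t *\<^sub>R x)"
proof -
  have bis': "max (\<bar>z$1 + x$1\<bar>) (\<bar>z$2 + x$2\<bar>) = max (\<bar>z$1 - x$1\<bar>) (\<bar>z$2 - x$2\<bar>)"
    using bis unfolding max_norm_def by simp
  have le: "\<bar>x$1\<bar> \<le> 1" "\<bar>x$2\<bar> \<le> 1" "\<bar>z$1\<bar> \<le> 1" "\<bar>z$2\<bar> \<le> 1"
    using x z unfolding max_norm_def by auto
  show ?thesis
  proof (cases "\<bar>x$1\<bar> = 1")
    case True
    from max_bisector_bound[OF True le(2,4) bis', of t] show ?thesis
      unfolding max_norm_def by simp
  next
    case False
    then have "\<bar>x$2\<bar> = 1" using x unfolding max_norm_def by (simp add: max_def split: if_splits)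
    from max_bisector_bound[OF this le(1,3) bis'[unfolded max.commute[of "\<bar>z$1 + x$1\<bar>"] max.commute[of "\<bar>z$1 - x$1\<bar>"]], of t]
    show ?thesis unfolding max_norm_def by (simp add: max.commute)
  qed
qed

lemma max_norm_sine_inner_proj_ge:
  assumes x: "x \<in> unit_circle_N max_norm" and w: "w \<in> inner_proj max_norm x"
  shows "1 / 2 \<le> sine_N max_norm w x"
proof -
  obtain z where bis: "max_norm (z + x) = max_norm (z - x)" and z: "max_norm z \<le> 1" "z \<noteq> 0"
    and w_def: "w = (1 / max_norm z) *\<^sub>R z"
    using w unfolding mem_inner_proj_iff by blast
  have "1 / 2 * max_norm z \<le> max_norm (z + t *\<^sub>R x)" for t
    using max_norm_bisector_bound[OF _ z(1) bis, of t] x unfolding unit_circle_N_def by simp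
  then show ?thesis
    unfolding w_def by (rule sine_N_normalize_ge[OF is_norm_max_norm z(2)])
qed

lemma max_norm_inner_proj_nonempty:
  assumes x: "x \<in> unit_circle_N max_norm"
  shows "inner_proj max_norm x \<noteq> {}"
proof -
  have "max \<bar>x$1\<bar> \<bar>x$2\<bar> = 1" using x by (simp add: unit_circle_N_def max_norm_def)
  then consider "\<bar>x$1\<bar> = 1" "\<bar>x$2\<bar> < 1" | "\<bar>x$2\<bar> = 1" "\<bar>x$1\<bar> < 1" | "\<bar>x$1\<bar> = 1" "\<bar>x$2\<bar> = 1"
    by linarith
  then have "\<exists>z. max_norm (z + x) = max_norm (z - x) \<and> max_norm z \<le> 1 \<and> z \<noteq> 0"
  proof cases
    case 1
    let ?z = "vector [0, 1 - \<bar>x$2\<bar>] :: real^2"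
    have "\<bar>1 - \<bar>x$2\<bar> + x$2\<bar> \<le> 1" "\<bar>1 - \<bar>x$2\<bar> - x$2\<bar> \<le> 1" using 1 by arith+
    then have "max_norm (?z + x) = max_norm (?z - x)" using 1 by (simp add: max_norm_def max_absorb1)
    moreover have "max_norm ?z \<le> 1" "?z \<noteq> 0" using 1 by (simp_all add: max_norm_def vec_eq_iff forall_2)
    ultimately show ?thesis by blast
  next
    case 2
    let ?z = "vector [1 - \<bar>x$1\<bar>, 0] :: real^2"
    have "\<bar>1 - \<bar>x$1\<bar> + x$1\<bar> \<le> 1" "\<bar>1 - \<bar>x$1\<bar> - x$1\<bar> \<le> 1" using 2 by arith+
    then have "max_norm (?z + x) = max_norm (?z - x)" using 2 by (simp add: max_norm_def max_absorb2)
    moreover have "max_norm ?z \<le> 1" "?z \<noteq> 0" using 2 by (simp_all add: max_norm_def vec_eq_iff forall_2)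
    ultimately show ?thesis by blast
  next
    case 3
    let ?z = "vector [x$1, - x$2] :: real^2"
    have "max_norm (?z + x) = max_norm (?z - x)" using 3 by (simp add: max_norm_def)
    moreover have "max_norm ?z \<le> 1" "?z \<noteq> 0" using 3 by (auto simp: max_norm_def vec_eq_iff forall_2)
    ultimately show ?thesis by blast
  qed
  then have "\<exists>w. w \<in> inner_proj max_norm x" unfolding mem_inner_proj_iff by blast
  then show ?thesis by blast
qed

lemma max_norm_sine_witness:
  fixes a :: real
  assumes "0 \<le> a" "a < 1"
  shows "vector [1, a] \<in> unit_circle_N max_norm"
    and "vector [0, 1] \<in> inner_proj max_norm (vector [1, a])"
    and "sine_N max_norm (vector [0, 1]) (vector [1, a]) \<le> 1 / (1 + a)"
proof -
  show "vector [1, a] \<in> unit_circle_N max_norm"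
    using assms by (simp add: unit_circle_N_def max_norm_def)
  let ?z = "vector [0, 1 - a] :: real^2"
  have "max_norm (?z + vector [1, a]) = max_norm (?z - vector [1, a])" "max_norm ?z \<le> 1" "?z \<noteq> 0"
    "vector [0, 1] = (1 / max_norm ?z) *\<^sub>R ?z"
    using assms by (auto simp: max_norm_def vec_eq_iff forall_2)
  then show "vector [0, 1] \<in> inner_proj max_norm (vector [1, a])"
    unfolding mem_inner_proj_iff by blast
  have "sine_N max_norm (vector [0, 1]) (vector [1, a])
      \<le> max_norm (vector [0, 1] + (- 1 / (1 + a)) *\<^sub>R vector [1, a])"
    unfolding sine_N_def
    by (rule cINF_lower) (auto intro: bdd_belowI[of _ 0] simp: is_norm_nonneg[OF is_norm_max_norm])
  also have "\<dots> = 1 / (1 + a)"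
  proof -
    have "1 - a / (1 + a) = 1 / (1 + a)" using assms by (simp add: field_simps)
    then show ?thesis using assms by (simp add: max_norm_def)
  qed
  finally show "sine_N max_norm (vector [0, 1]) (vector [1, a]) \<le> 1 / (1 + a)" .
qed

lemma c_B_max_norm: "c_B max_norm = 1 / 2"
proof -
  define g where "g x = (INF w\<in>inner_proj max_norm x. sine_N max_norm w x)" for x
  have sine_bdd: "bdd_below ((\<lambda>w. sine_N max_norm w x) ` inner_proj max_norm x)"
    if "x \<in> unit_circle_N max_norm" for x
    using max_norm_sine_inner_proj_ge[OF that] by (auto intro: bdd_belowI[of _ "1 / 2"])
  txt \<open>Non-emptiness of the inner projections matters: the infimum of the empty set is junk.\<close>
  have g_ge: "1 / 2 \<le> g x" if "x \<in> unit_circle_N max_norm" for x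
    unfolding g_def using that
    by (intro cINF_greatest max_norm_inner_proj_nonempty max_norm_sine_inner_proj_ge)
  have g_bdd: "bdd_below (g ` unit_circle_N max_norm)"
    using g_ge by (auto intro: bdd_belowI[of _ "1 / 2"])
  have lower: "1 / 2 \<le> c_B max_norm"
    unfolding c_B_def g_def[symmetric]
    using max_norm_sine_witness(1)[of 0] by (intro cINF_greatest g_ge) auto
  have upper: "c_B max_norm \<le> 1 / (1 + a)" if a: "0 \<le> a" "a < 1" for a
  proof -
    have "c_B max_norm \<le> g (vector [1, a])"
      unfolding c_B_def g_def[symmetric] by (rule cINF_lower[OF g_bdd max_norm_sine_witness(1)[OF a]])
    also have "\<dots> \<le> sine_N max_norm (vector [0, 1]) (vector [1, a])"
      unfolding g_def
      by (rule cINF_lower[OF sine_bdd max_norm_sine_witness(2)]) (use max_norm_sine_witness(1) a in auto)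
    also have "\<dots> \<le> 1 / (1 + a)" by (rule max_norm_sine_witness(3)[OF a])
    finally show ?thesis .
  qed
  have "c_B max_norm \<le> 1 / 2"
  proof (rule tendsto_lowerbound)
    show "((\<lambda>a::real. 1 / (1 + a)) \<longlongrightarrow> 1 / 2) (at_left 1)"
      by (auto intro!: tendsto_eq_intros)
    show "\<forall>\<^sub>F a in at_left 1. c_B max_norm \<le> 1 / (1 + a)"
      using eventually_at_left_real[OF zero_less_one] by eventually_elim (auto intro: upper)
  qed simp
  with lower show ?thesis by simp
qed

lemma inner_proj_comp_linear:
  assumes lin: "linear K" and bij: "bij K"
  shows "K ` inner_proj (\<lambda>z. N (K z)) x = inner_proj N (K x)"
proof -
  have surj: "surj K" using bij by (simp add: bij_def)
  have K0: "K z = 0 \<longleftrightarrow> z = 0" for z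
    using bij linear_0[OF lin] by (metis bij_def injD)
  let ?A = "(bis N (- K x) (K x) \<inter> unit_ball_N N) - {0}"
  have "(bis (\<lambda>z. N (K z)) (- x) x \<inter> unit_ball_N (\<lambda>z. N (K z))) - {0} = K -` ?A"
    by (auto simp: bis_def unit_ball_N_def linear_add[OF lin] linear_diff[OF lin] linear_neg[OF lin] K0)
  then have "K ` inner_proj (\<lambda>z. N (K z)) x = (\<lambda>y. (1 / N y) *\<^sub>R y) ` K ` K -` ?A"
    unfolding inner_proj_def image_image by (simp add: linear_scale[OF lin])
  also have "K ` K -` ?A = ?A" using surj by (simp add: surj_image_vimage_eq)
  finally show ?thesis unfolding inner_proj_def .
qed

lemma c_B_comp_linear:
  assumes lin: "linear K" and bij: "bij K"
  shows "c_B (\<lambda>z. N (K z)) = c_B N"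
proof -
  define g where "g y = (INF w\<in>inner_proj N y. sine_N N w y)" for y
  have sine: "sine_N (\<lambda>z. N (K z)) w x = sine_N N (K w) (K x)" for w x
    unfolding sine_N_def by (simp add: linear_add[OF lin] linear_scale[OF lin])
  have circle: "K ` unit_circle_N (\<lambda>z. N (K z)) = unit_circle_N N"
    using bij by (auto simp: unit_circle_N_def bij_def surj_image_vimage_eq vimage_def[symmetric])
  have "c_B (\<lambda>z. N (K z)) = (INF x\<in>unit_circle_N (\<lambda>z. N (K z)). g (K x))"
    unfolding c_B_def sine g_def inner_proj_comp_linear[OF lin bij, symmetric] image_image ..
  also have "\<dots> = c_B N"
    unfolding c_B_def g_def[symmetric] circle[symmetric] image_image ..
  finally show ?thesis .
qed

lemma independent_pair_eq_0:
  fixes u v :: "'a::real_vector"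
  assumes "independent {u, v}" "u \<noteq> v" "a *\<^sub>R u + b *\<^sub>R v = 0"
  shows "a = 0 \<and> b = 0"
proof -
  let ?c = "\<lambda>w. if w = u then a else b"
  have sum: "(\<Sum>w\<in>{u, v}. ?c w *\<^sub>R w) = 0" using assms(2,3) by simp
  have "?c w = 0" if "w \<in> {u, v}" for w
    using independent_explicit_module[THEN iffD1, OF assms(1), rule_format, of "{u, v}" ?c w] sum that
    by simp
  from this[of u] this[of v] show ?thesis using assms(2) by simp
qed

lemma unit_cube_boundary_eq:
  "cbox (0::real^2) 1 - box 0 1 = (\<lambda>q. (1 / 2) *\<^sub>R (q + 1)) ` unit_circle_N max_norm"
proof (intro set_eqI iffI)
  fix w :: "real^2"
  assume "w \<in> cbox 0 1 - box 0 1"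
  then have "max_norm (2 *\<^sub>R w - 1) = 1"
    unfolding Diff_iff mem_box_cart forall_2 max_norm_def by (auto simp: max_def)
  moreover have "w = (1 / 2) *\<^sub>R ((2 *\<^sub>R w - 1) + 1)" by simp
  ultimately show "w \<in> (\<lambda>q. (1 / 2) *\<^sub>R (q + 1)) ` unit_circle_N max_norm"
    unfolding unit_circle_N_def by blast
next
  fix w :: "real^2"
  assume "w \<in> (\<lambda>q. (1 / 2) *\<^sub>R (q + 1)) ` unit_circle_N max_norm"
  then obtain q where "max \<bar>q$1\<bar> \<bar>q$2\<bar> = 1" "w = (1 / 2) *\<^sub>R (q + 1)"
    unfolding unit_circle_N_def max_norm_def by blast
  then show "w \<in> cbox 0 1 - box 0 1"
    unfolding Diff_iff mem_box_cart forall_2 by (auto simp: max_def split: if_splits)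
qed

lemma unit_square_convex_hull:
  "cbox (0::real^2) 1 = convex hull {vector [0, 0], vector [1, 0], vector [0, 1], vector [1, 1]}"
proof -
  have "{w::real^2. \<forall>i\<in>Basis. w \<bullet> i = 0 \<or> w \<bullet> i = 1}
      = {vector [0, 0], vector [1, 0], vector [0, 1], vector [1, 1]}"
    by (auto simp: Basis_vec_def inner_axis vec_eq_iff forall_2)
  then show ?thesis using unit_interval_convex_hull[where 'a="real^2"] by (simp add: Cart_1)
qed

lemma frontier_parallelogram:
  assumes "parallelogram P"
  obtains c K where "linear K" "bij K" "frontier P = (\<lambda>q. c + K q) ` unit_circle_N max_norm"
proof -
  obtain p u v where ind: "independent {u, v}" "u \<noteq> v"
    and P: "P = convex hull {p, p + u, p + v, p + u + v}"
    using assms unfolding parallelogram_def by blast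
  define L where "L = (\<lambda>w::real^2. w$1 *\<^sub>R u + w$2 *\<^sub>R v)"
  have lin: "linear L" unfolding L_def by (rule linearI) (simp_all add: algebra_simps)
  have inj: "inj L"
  proof (rule linear_injective_0[OF lin, THEN iffD2], intro allI impI)
    fix w assume "L w = 0"
    then have "w$1 *\<^sub>R u + w$2 *\<^sub>R v = 0" by (simp add: L_def)
    then have "w$1 = 0 \<and> w$2 = 0" by (rule independent_pair_eq_0[OF ind])
    then show "w = 0" by (simp add: vec_eq_iff forall_2)
  qed
  have corners: "{p, p + u, p + v, p + u + v}
      = (+) p ` L ` {vector [0, 0], vector [1, 0], vector [0, 1], vector [1, 1]}"
    by (simp add: L_def add.assoc)
  have "P = (+) p ` L ` cbox 0 1"
    unfolding P corners convex_hull_translation convex_hull_linear_image[OF lin] unit_square_convex_hull ..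
  moreover have "frontier (L ` cbox 0 1) = L ` (cbox 0 1 - box 0 1)"
    by (simp add: frontier_def closure_injective_linear_image[OF lin inj, symmetric]
        interior_injective_linear_image[OF lin inj] image_set_diff[OF inj])
  ultimately have "frontier P = (+) p ` L ` (cbox 0 1 - box 0 1)"
    by (simp add: frontier_translation)
  also have "\<dots> = (\<lambda>q. (p + (1 / 2) *\<^sub>R L 1) + (1 / 2) *\<^sub>R L q) ` unit_circle_N max_norm"
    unfolding unit_cube_boundary_eq image_image
    by (simp add: linear_add[OF lin] linear_scale[OF lin] algebra_simps)
  finally have "frontier P = (\<lambda>q. (p + (1 / 2) *\<^sub>R L 1) + (1 / 2) *\<^sub>R L q) ` unit_circle_N max_norm" .
  moreover have "linear (\<lambda>q. (1 / 2) *\<^sub>R L q)"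
    using lin unfolding linear_iff by (simp add: scaleR_add_right)
  moreover have "inj (\<lambda>q. (1 / 2) *\<^sub>R L q)" using inj unfolding inj_on_def by simp
  ultimately show ?thesis
    by (intro that[of "\<lambda>q. (1 / 2) *\<^sub>R L q"]) (simp_all add: bij_def linear_injective_imp_surjective)
qed

lemma unit_circle_N_comp_inj:
  assumes "inj K" "unit_circle_N N = K ` S"
  shows "unit_circle_N (\<lambda>z. N (K z)) = S"
proof -
  have "z \<in> unit_circle_N (\<lambda>z. N (K z)) \<longleftrightarrow> K z \<in> K ` S" for z
    unfolding assms(2)[symmetric] by (simp add: unit_circle_N_def)
  then show ?thesis using assms(1) by (auto simp: inj_image_mem_iff)
qed

lemma affine_unit_circle_centre_eq_0:
  assumes N: "is_norm N" and K: "linear K"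
    and S: "unit_circle_N N = (\<lambda>q. c + K q) ` unit_circle_N max_norm"
  shows "c = 0"
proof -
  txt \<open>The unit circle is symmetric about 0 and about c.\<close>
  have "s + - (2 *\<^sub>R c) \<in> unit_circle_N N" if s: "s \<in> unit_circle_N N" for s
  proof -
    obtain q where "q \<in> unit_circle_N max_norm" "s = c + K q" using s unfolding S by blast
    then have q: "max_norm q = 1" "s = c + K q" by (simp_all add: unit_circle_N_def)
    have "max_norm (- q) = 1" using q(1) is_norm_minus[OF is_norm_max_norm] by simp
    then have "c + K (- q) \<in> unit_circle_N N"
      unfolding S by (intro imageI) (simp add: unit_circle_N_def)
    then have "N (- (c + K (- q))) = 1"
      unfolding unit_circle_N_def is_norm_minus[OF N, of "c + K (- q)"] by simp
    moreover have "- (c + K (- q)) = s + - (2 *\<^sub>R c)" using q(2) by (simp add: linear_neg[OF K] scaleR_2)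
    ultimately show ?thesis by (simp add: unit_circle_N_def)
  qed
  moreover have "c + K (vector [1, 0]) \<in> unit_circle_N N"
    unfolding S by (intro imageI) (simp add: unit_circle_N_def max_norm_def)
  ultimately have "- (2 *\<^sub>R c) = 0" by (intro unit_circle_translation_eq_0[OF N])
  then show ?thesis by simp
qed

theorem mainTheorem14:
  fixes N :: "real^2 \<Rightarrow> real"
  assumes "is_norm N"
    and "rectilinear N"
  shows "c_B N = 1 / 2"
proof -
  obtain P where "parallelogram P" and "unit_circle_N N = frontier P"
    using assms(2) unfolding rectilinear_def by blast
  then obtain c K where K: "linear K" "bij K"
    and S: "unit_circle_N N = (\<lambda>q. c + K q) ` unit_circle_N max_norm"
    by (metis frontier_parallelogram)
  have "c = 0" by (rule affine_unit_circle_centre_eq_0[OF assms(1) K(1) S])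
  with S K(2) have "unit_circle_N (\<lambda>z. N (K z)) = unit_circle_N max_norm"
    by (simp add: bij_def unit_circle_N_comp_inj)
  then have "(\<lambda>z. N (K z)) = max_norm"
    using K is_norm_comp_linear[OF assms(1)] is_norm_max_norm is_norm_eq_if_unit_circle_eq
    by (simp add: bij_def)
  then show ?thesis using c_B_comp_linear[OF K, of N] c_B_max_norm by simp
qed

end
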